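(* Let $G$ be a finite simple graph with maximum degree $d$, equipped with a rotation system, and let $L\ge 2$ be an even integer. Then $G$ has an $L$-localized edge coloring using at most $\min\{d,2L\}+1$ colors.
   Context: A rotation system of $G$ specifies, for each vertex $u$, a cyclic (clockwise) ordering of the edges incident to $u$. For an edge $e$ incident to $u$, if the clockwise cyclic ordering of edges at $u$ is $(l_1,\dots,l_k)$ with $e=l_i$, the $L$-neighborhood of $e$ around $u$ is the set of edges $l_{i-L/2},\dots,l_{i-1},l_{i+1},\dots,l_{i+L/2}$ (indices taken cyclically), i.e., the $L/2$ edges before and the $L/2$ edges after $e$ in the ordering, excluding $e$ itself. An $L$-localized edge coloring is an assignment of colors to the edges of $G$ such that for every edge $e=(u,v)$, no edge in the $L$-neighborhood of $e$ around $u$ and no edge in the $L$-neighborhood of $e$ around $v$ has the same color as $e$. *)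

theory Defs
  imports Main
begin

definition finite_simple_graph :: "'a set \<Rightarrow> 'a set set \<Rightarrow> bool" where
  "finite_simple_graph V E \<longleftrightarrow> finite V \<and> (\<forall>e\<in>E. e \<subseteq> V \<and> card e = 2)"

definition incident_edges :: "'a set set \<Rightarrow> 'a \<Rightarrow> 'a set set" where
  "incident_edges E v = {e \<in> E. v \<in> e}"

definition degree :: "'a set set \<Rightarrow> 'a \<Rightarrow> nat" where
  "degree E v = card (incident_edges E v)"

definition max_degree :: "'a set \<Rightarrow> 'a set set \<Rightarrow> nat" where
  "max_degree V E = Max ((degree E) ` V)"

text \<open>A rotation system: for each vertex u, a list enumerating (without repetition)
  the edges incident to u; the list is read cyclically (clockwise order).\<close>
definition rotation_system :: "'a set \<Rightarrow> 'a set set \<Rightarrow> ('a \<Rightarrow> 'a set list) \<Rightarrow> bool" where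
  "rotation_system V E rot \<longleftrightarrow>
     (\<forall>u\<in>V. distinct (rot u) \<and> set (rot u) = incident_edges E u)"

definition L_neighborhood :: "('a \<Rightarrow> 'a set list) \<Rightarrow> nat \<Rightarrow> 'a \<Rightarrow> 'a set \<Rightarrow> 'a set set" where
  "L_neighborhood rot L u e =
     {rot u ! nat ((int i + j) mod int (length (rot u))) | i j.
        i < length (rot u) \<and> rot u ! i = e \<and>
        j \<in> {- int (L div 2) .. int (L div 2)} \<and> j \<noteq> 0} - {e}"

definition L_localized_coloring ::
  "'a set set \<Rightarrow> ('a \<Rightarrow> 'a set list) \<Rightarrow> nat \<Rightarrow> ('a set \<Rightarrow> 'c) \<Rightarrow> bool" where
  "L_localized_coloring E rot L col \<longleftrightarrow>
     (\<forall>e\<in>E. \<forall>u\<in>e. \<forall>f\<in>L_neighborhood rot L u e. col f \<noteq> col e)"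

end

theory Submission
  imports Defs
begin

text \<open>If \<open>d \<le> 2 L\<close>, every proper edge colouring is \<open>L\<close>-localized, and Vizing's theorem
  supplies one with \<open>d + 1\<close> colours.  Vizing's theorem is proved by induction on the edges: to
  colour a new edge \<open>{x, y\<^sub>0}\<close>, take a maximal fan \<open>y\<^sub>0, \<dots>, y\<^sub>n\<close> at \<open>x\<close> and a colour \<open>\<beta>\<close>
  missing at \<open>y\<^sub>n\<close>.  If \<open>\<beta>\<close> is missing at \<open>x\<close> too, shift the colours along the fan; otherwise
  swapping the alternating \<open>\<alpha>\<beta>\<close>-path from \<open>x\<close>, for a colour \<open>\<alpha>\<close> missing at \<open>x\<close>, makes such
  a shift possible.  If \<open>d > 2 L\<close>, the \<open>L\<close>-neighbourhood of an edge around each endpoint has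
  at most \<open>L\<close> elements, so greedy colouring needs at most \<open>2 L + 1\<close> colours.\<close>

section \<open>Proper edge colourings\<close>

definition proper_edge_coloring :: "'a set set \<Rightarrow> ('a set \<Rightarrow> 'c) \<Rightarrow> bool" where
  "proper_edge_coloring F c \<longleftrightarrow> (\<forall>f\<in>F. \<forall>g\<in>F. f \<noteq> g \<longrightarrow> f \<inter> g \<noteq> {} \<longrightarrow> c f \<noteq> c g)"

definition missing :: "'a set set \<Rightarrow> ('a set \<Rightarrow> 'c) \<Rightarrow> 'a \<Rightarrow> 'c \<Rightarrow> bool" where
  "missing F c z \<gamma> \<longleftrightarrow> (\<forall>g\<in>F. z \<in> g \<longrightarrow> c g \<noteq> \<gamma>)"

lemma proper_edge_coloringD:
  assumes "proper_edge_coloring F c" "f \<in> F" "g \<in> F" "z \<in> f" "z \<in> g" "c f = c g"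
  shows "f = g"
  using assms unfolding proper_edge_coloring_def by blast

lemma card_2_obtain:
  assumes "card g = 2" "x \<in> g"
  obtains z where "g = {x, z}"
  using assms by (metis card_2_iff doubleton_eq_iff insertE singletonD)

lemma ex_less_notin:
  fixes A :: "nat set"
  assumes "finite A" "card A < k"
  shows "\<exists>\<gamma><k. \<gamma> \<notin> A"
proof (rule ccontr)
  assume "\<not> ?thesis"
  then have "{..<k} \<subseteq> A" by auto
  from card_mono[OF assms(1) this] assms(2) show False by simp
qed

lemma ex_missing_color:
  fixes c :: "'a set \<Rightarrow> nat"
  assumes "finite F" "degree F z < k"
  shows "\<exists>\<gamma><k. missing F c z \<gamma>"
proof -
  have fin: "finite (incident_edges F z)"
    using assms(1) unfolding incident_edges_def by simp
  then have "card (c ` incident_edges F z) < k"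
    using assms(2) card_image_le[of "incident_edges F z" c] unfolding degree_def by simp
  then obtain \<gamma> where "\<gamma> < k" "\<gamma> \<notin> c ` incident_edges F z"
    using ex_less_notin fin by blast
  then show ?thesis unfolding missing_def incident_edges_def by auto
qed

lemma degree_mono: "finite F' \<Longrightarrow> F \<subseteq> F' \<Longrightarrow> degree F z \<le> degree F' z"
  unfolding degree_def incident_edges_def by (intro card_mono) auto

lemma card_image_le_bound:
  fixes c :: "'b \<Rightarrow> nat"
  assumes "\<forall>e\<in>E. c e < k"
  shows "card (c ` E) \<le> k"
proof -
  have "c ` E \<subseteq> {..<k}" using assms by auto
  from card_mono[OF _ this] show ?thesis by simp
qed

section \<open>Kempe chains\<close>

text \<open>The alternating path from \<open>x\<close> whose edges are coloured \<open>\<beta>, \<alpha>, \<beta>, \<dots>\<close>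
  (a Kempe chain); once it cannot be continued, \<open>walk\<close> stays at its endpoint.\<close>
locale kempe_chain =
  fixes F :: "'a set set" and c :: "'a set \<Rightarrow> 'c" and \<alpha> \<beta> :: 'c and x :: 'a
  assumes two_elements: "\<And>f. f \<in> F \<Longrightarrow> card f = 2"
    and proper: "proper_edge_coloring F c"
    and colors_distinct: "\<alpha> \<noteq> \<beta>"
    and missing_start: "missing F c x \<alpha>"
begin

definition alt_color :: "nat \<Rightarrow> 'c" where
  "alt_color i = (if even i then \<beta> else \<alpha>)"

definition has_edge :: "'c \<Rightarrow> 'a \<Rightarrow> bool" where
  "has_edge \<gamma> v \<longleftrightarrow> (\<exists>w. {v, w} \<in> F \<and> c {v, w} = \<gamma>)"

primrec walk :: "nat \<Rightarrow> 'a" where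
  "walk 0 = x"
| "walk (Suc i) =
     (if has_edge (alt_color i) (walk i)
      then SOME w. {walk i, w} \<in> F \<and> c {walk i, w} = alt_color i
      else walk i)"

declare walk.simps(2) [simp del]

definition reaches :: "nat \<Rightarrow> bool" where
  "reaches l \<longleftrightarrow> (\<forall>i<l. has_edge (alt_color i) (walk i))"

definition chain :: "'a set set" where
  "chain = {{walk i, walk (Suc i)} | i. reaches (Suc i)}"

definition swapped :: "'a set \<Rightarrow> 'c" where
  "swapped f = (if f \<in> chain then (if c f = \<alpha> then \<beta> else \<alpha>) else c f)"

lemma reaches_0: "reaches 0"
  unfolding reaches_def by simp

lemma reaches_mono: "reaches l \<Longrightarrow> l' \<le> l \<Longrightarrow> reaches l'"
  unfolding reaches_def by auto

lemma walk_step: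
  assumes "reaches (Suc i)"
  shows "{walk i, walk (Suc i)} \<in> F \<and> c {walk i, walk (Suc i)} = alt_color i"
proof -
  have edge: "has_edge (alt_color i) (walk i)"
    using assms unfolding reaches_def by simp
  then have "\<exists>w. {walk i, w} \<in> F \<and> c {walk i, w} = alt_color i"
    unfolding has_edge_def .
  from someI_ex[OF this] show ?thesis using edge by (simp add: walk.simps(2))
qed

lemma chain_subset:
  assumes "g \<in> chain"
  shows "g \<in> F \<and> (c g = \<alpha> \<or> c g = \<beta>)"
proof -
  obtain i where "g = {walk i, walk (Suc i)}" "reaches (Suc i)"
    using assms unfolding chain_def by blast
  then show ?thesis using walk_step[of i] unfolding alt_color_def by auto
qed

lemma vertex_of_chain:
  assumes "z \<in> \<Union>chain"
  shows "\<exists>l. reaches l \<and> z = walk l"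
proof -
  obtain i where "reaches (Suc i)" "z = walk i \<or> z = walk (Suc i)"
    using assms unfolding chain_def by blast
  then show ?thesis using reaches_mono[of "Suc i" i] by auto
qed

text \<open>An \<open>\<alpha>\<beta>\<close>-edge at the \<open>l\<close>-th vertex is either the next edge of the walk or, by
  properness, the previous one; at \<open>x\<close> there is no previous one as \<open>\<alpha>\<close> is missing there.\<close>
lemma chain_closed:
  assumes r: "reaches l" and g: "g \<in> F" "walk l \<in> g" and cg: "c g = \<alpha> \<or> c g = \<beta>"
  shows "g \<in> chain"
proof (cases "c g = alt_color l")
  case True
  obtain w where "g = {walk l, w}"
    using card_2_obtain[OF two_elements[OF g(1)] g(2)] .
  then have "has_edge (alt_color l) (walk l)"
    unfolding has_edge_def using g True by auto
  then have r': "reaches (Suc l)"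
    using r unfolding reaches_def by (auto simp: less_Suc_eq)
  have "g = {walk l, walk (Suc l)}"
    using proper_edge_coloringD[OF proper g(1) _ g(2)] walk_step[OF r'] True by auto
  then show ?thesis unfolding chain_def using r' by blast
next
  case False
  obtain l' where l': "l = Suc l'"
    using False cg missing_start g unfolding missing_def alt_color_def by (cases l) auto
  have "c g = alt_color l'"
    using False cg colors_distinct unfolding l' alt_color_def by auto
  then have "g = {walk l', walk (Suc l')}"
    using proper_edge_coloringD[OF proper g(1) _ g(2)] walk_step r l' by auto
  then show ?thesis unfolding chain_def using r l' by blast
qed

lemma proper_swapped: "proper_edge_coloring F swapped"
  unfolding proper_edge_coloring_def
proof (intro ballI impI)
  fix f g assume f: "f \<in> F" and g: "g \<in> F" and "f \<noteq> g" "f \<inter> g \<noteq> {}"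
  then obtain z where z: "z \<in> f" "z \<in> g" and cfg: "c f \<noteq> c g"
    using proper unfolding proper_edge_coloring_def by blast
  have closed: "h' \<in> chain"
    if "h \<in> chain" "h' \<in> F" "c h' = \<alpha> \<or> c h' = \<beta>" "z \<in> h" "z \<in> h'" for h h'
    using vertex_of_chain[of z] chain_closed that by blast
  show "swapped f \<noteq> swapped g"
    using closed[of f g] closed[of g f] f g z cfg chain_subset colors_distinct
    unfolding swapped_def by (auto split: if_splits)
qed

lemma missing_swapped_off_chain:
  "z \<notin> \<Union>chain \<Longrightarrow> missing F swapped z \<gamma> \<longleftrightarrow> missing F c z \<gamma>"
  unfolding missing_def swapped_def by auto

lemma missing_swapped_other_color:
  "\<gamma> \<noteq> \<alpha> \<Longrightarrow> \<gamma> \<noteq> \<beta> \<Longrightarrow> missing F swapped z \<gamma> \<longleftrightarrow> missing F c z \<gamma>"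
  unfolding missing_def swapped_def using chain_subset by auto

lemma missing_swapped_on_walk:
  assumes "reaches l" "{\<gamma>, \<delta>} = {\<alpha>, \<beta>}" "missing F c (walk l) \<gamma>"
  shows "missing F swapped (walk l) \<delta>"
  unfolding missing_def
proof (intro ballI impI)
  fix g assume g: "g \<in> F" "walk l \<in> g"
  show "swapped g \<noteq> \<delta>"
  proof (cases "g \<in> chain")
    case True
    then show ?thesis
      using chain_subset assms(2,3) g colors_distinct
      unfolding swapped_def missing_def doubleton_eq_iff by auto
  next
    case False
    then show ?thesis
      using chain_closed[OF assms(1) g] assms(2) unfolding swapped_def doubleton_eq_iff by auto
  qed
qed

text \<open>A walk vertex other than \<open>x\<close> at which \<open>\<beta>\<close> is missing was entered by an \<open>\<alpha>\<close>-edge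
  and must continue with a \<open>\<beta>\<close>-edge, so the walk ends there; hence there is at most one.\<close>
lemma walk_missing_unique:
  assumes "reaches a" "reaches b" "0 < a" "0 < b"
    and "missing F c (walk a) \<beta>" "missing F c (walk b) \<beta>"
  shows "walk a = walk b"
proof -
  have stuck: "\<not> has_edge (alt_color l) (walk l)"
    if "reaches l" "0 < l" "missing F c (walk l) \<beta>" for l
  proof -
    obtain l' where l': "l = Suc l'" using \<open>0 < l\<close> gr0_implies_Suc by blast
    have "alt_color l' \<noteq> \<beta>"
      using walk_step[OF that(1)[unfolded l']] that(3) l' unfolding missing_def by auto
    then have "alt_color l = \<beta>" unfolding l' alt_color_def by auto
    then show ?thesis
      using that(3) unfolding has_edge_def missing_def by auto
  qed
  have "a = b"
    using stuck[of a] stuck[of b] assms unfolding reaches_def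
    by (cases a b rule: linorder_cases) auto
  then show ?thesis by simp
qed

end

section \<open>Fans and Vizing's theorem\<close>

text \<open>A fan at \<open>x\<close>: the colour of the fan edge \<open>{x, y l}\<close> is missing at \<open>y (l - 1)\<close>;
  the edge \<open>{x, y 0}\<close> is the one still to be coloured.\<close>
definition fan :: "'a set set \<Rightarrow> ('a set \<Rightarrow> 'c) \<Rightarrow> 'a \<Rightarrow> (nat \<Rightarrow> 'a) \<Rightarrow> nat \<Rightarrow> bool" where
  "fan F c x y n \<longleftrightarrow>
     inj_on y {0..n} \<and> (\<forall>l\<in>{1..n}. {x, y l} \<in> F \<and> missing F c (y (l - 1)) (c {x, y l}))"

lemma fan_prefix: "fan F c x y n \<Longrightarrow> i \<le> n \<Longrightarrow> fan F c x y i"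
  unfolding fan_def by (auto intro: inj_on_subset)

lemma fan_vertex_ne:
  assumes "\<forall>f\<in>insert {x, y 0} F. card f = 2" "fan F c x y n" "l \<le> n"
  shows "y l \<noteq> x"
proof -
  have "{x, y l} \<in> insert {x, y 0} F"
    using assms(2,3) unfolding fan_def by (cases l) auto
  then show ?thesis using assms(1) by fastforce
qed

lemma recolor_star:
  fixes y :: "'i \<Rightarrow> 'a"
  assumes proper: "proper_edge_coloring F c"
    and inj: "inj_on (\<lambda>l. {x, y l}) I" and \<sigma>_inj: "inj_on \<sigma> I"
    and \<sigma>_missing: "\<And>l. l \<in> I \<Longrightarrow> missing F c (y l) (\<sigma> l)"
    and \<sigma>_at_x: "\<And>l g. l \<in> I \<Longrightarrow> g \<in> F \<Longrightarrow> g \<notin> (\<lambda>l. {x, y l}) ` I \<Longrightarrow> x \<in> g \<Longrightarrow> \<sigma> l \<noteq> c g"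
  obtains c' where "proper_edge_coloring (F \<union> (\<lambda>l. {x, y l}) ` I) c'"
    "\<And>l. l \<in> I \<Longrightarrow> c' {x, y l} = \<sigma> l" "\<And>f. f \<notin> (\<lambda>l. {x, y l}) ` I \<Longrightarrow> c' f = c f"
proof -
  let ?e = "\<lambda>l. {x, y l}"
  define c' where "c' f = (if f \<in> ?e ` I then \<sigma> (inv_into I ?e f) else c f)" for f
  have c'_star: "c' (?e l) = \<sigma> l" if "l \<in> I" for l
    using inv_into_f_f[OF inj that] that unfolding c'_def by auto
  have c'_other: "c' f = c f" if "f \<notin> ?e ` I" for f
    using that unfolding c'_def by simp
  have star: "c' (?e l) \<noteq> c' g"
    if "l \<in> I" "g \<in> F \<union> ?e ` I" "g \<noteq> ?e l" "?e l \<inter> g \<noteq> {}" for l g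
  proof (cases "g \<in> ?e ` I")
    case True
    then obtain m where "m \<in> I" "g = ?e m" by blast
    then show ?thesis using c'_star inj_onD[OF \<sigma>_inj] that by metis
  next
    case False
    have "x \<in> g \<or> y l \<in> g" using that(4) by auto
    then show ?thesis
      using \<sigma>_at_x[OF that(1) _ False] \<sigma>_missing[OF that(1)] that(2) False
      unfolding c'_star[OF that(1)] c'_other[OF False] missing_def by auto
  qed
  have "proper_edge_coloring (F \<union> ?e ` I) c'"
    unfolding proper_edge_coloring_def
  proof (intro ballI impI)
    fix f g assume f: "f \<in> F \<union> ?e ` I" and g: "g \<in> F \<union> ?e ` I" and "f \<noteq> g" "f \<inter> g \<noteq> {}"
    then consider "f \<in> ?e ` I" | "g \<in> ?e ` I" | "f \<in> F" "f \<notin> ?e ` I" "g \<in> F" "g \<notin> ?e ` I"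
      by blast
    then show "c' f \<noteq> c' g"
    proof cases
      case 1
      then show ?thesis using star g \<open>f \<noteq> g\<close> \<open>f \<inter> g \<noteq> {}\<close> by blast
    next
      case 2
      then show ?thesis using star[of _ f] f \<open>f \<noteq> g\<close> \<open>f \<inter> g \<noteq> {}\<close> by (fastforce simp: Int_commute)
    next
      case 3
      then show ?thesis
        using proper \<open>f \<noteq> g\<close> \<open>f \<inter> g \<noteq> {}\<close> c'_other unfolding proper_edge_coloring_def by auto
    qed
  qed
  with c'_star c'_other that show ?thesis by blast
qed

text \<open>Recolour each fan edge \<open>{x, y l}\<close> with the colour of the next one and the last
  one with \<open>\<gamma>\<close>.\<close>
lemma rotate_fan:
  fixes c :: "'a set \<Rightarrow> nat"
  assumes two: "\<forall>f\<in>insert {x, y 0} F. card f = 2"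
    and proper: "proper_edge_coloring F c" and bounded: "\<forall>f\<in>F. c f < k"
    and fan: "fan F c x y i"
    and \<gamma>: "missing F c x \<gamma>" "missing F c (y i) \<gamma>" "\<gamma> < k"
  shows "\<exists>c'. proper_edge_coloring (insert {x, y 0} F) c' \<and> (\<forall>f\<in>insert {x, y 0} F. c' f < k)"
proof -
  let ?e = "\<lambda>l. {x, y l}"
  have next_edge: "?e (Suc l) \<in> F \<and> missing F c (y l) (c (?e (Suc l)))" if "l < i" for l
  proof -
    have "Suc l \<in> {1..i}" using that by simp
    then show ?thesis using fan unfolding fan_def by fastforce
  qed
  note edge = conjunct1[OF next_edge]
  have inj_e: "inj_on ?e {0..i}"
  proof (rule inj_onI)
    fix l m assume "l \<in> {0..i}" "m \<in> {0..i}" "?e l = ?e m"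
    then show "l = m"
      using fan fan_vertex_ne[OF two fan] unfolding fan_def inj_on_def doubleton_eq_iff
      by auto
  qed
  define \<sigma> where "\<sigma> l = (if l < i then c (?e (Suc l)) else \<gamma>)" for l
  have \<sigma>_missing: "missing F c (y l) (\<sigma> l)" if "l \<in> {0..i}" for l
    using next_edge \<gamma>(2) that unfolding \<sigma>_def by (cases "l < i") auto
  have \<sigma>_at_x: "\<sigma> l \<noteq> c g" if "l \<in> {0..i}" "g \<in> F" "g \<notin> ?e ` {0..i}" "x \<in> g" for l g
  proof (cases "l < i")
    case True
    then have "?e (Suc l) \<noteq> g" using that(3) by auto
    then show ?thesis
      using proper_edge_coloringD[OF proper edge[OF True] that(2), of x] that(4) True
      unfolding \<sigma>_def by auto
  qed (use \<gamma>(1) that in \<open>auto simp: \<sigma>_def missing_def\<close>)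
  have \<sigma>_ne: "\<sigma> l \<noteq> \<sigma> m" if "l < m" "m \<le> i" for l m
  proof (cases "m < i")
    case True
    have "?e (Suc l) \<noteq> ?e (Suc m)"
      using inj_onD[OF inj_e, of "Suc l" "Suc m"] that True by auto
    then show ?thesis
      using proper_edge_coloringD[OF proper edge edge, of l m x] that True unfolding \<sigma>_def by auto
  qed (use \<gamma>(1) edge[of l] that in \<open>auto simp: \<sigma>_def missing_def\<close>)
  have "inj_on \<sigma> {0..i}"
  proof (rule inj_onI, rule ccontr)
    fix l m assume "l \<in> {0..i}" "m \<in> {0..i}" "\<sigma> l = \<sigma> m" "l \<noteq> m"
    then show False using \<sigma>_ne[of l m] \<sigma>_ne[of m l] by (cases "l < m") auto
  qed
  then obtain c' where c': "proper_edge_coloring (F \<union> ?e ` {0..i}) c'"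
    "\<And>l. l \<in> {0..i} \<Longrightarrow> c' (?e l) = \<sigma> l" "\<And>f. f \<notin> ?e ` {0..i} \<Longrightarrow> c' f = c f"
    using recolor_star[OF proper inj_e _ \<sigma>_missing \<sigma>_at_x] by blast
  have "?e l \<in> insert (?e 0) F" if "l \<le> i" for l
    using edge[of "l - 1"] that by (cases l) auto
  then have "F \<union> ?e ` {0..i} = insert (?e 0) F" by fastforce
  moreover have "c' f < k" if "f \<in> F \<union> ?e ` {0..i}" for f
    using that c'(2,3) bounded edge \<gamma>(3) unfolding \<sigma>_def by (cases "f \<in> ?e ` {0..i}") auto
  ultimately show ?thesis using c'(1) by auto
qed

lemma fan_snoc:
  assumes fan: "fan F c x y n" and z: "{x, z} \<in> F" "z \<notin> y ` {0..n}"
    "missing F c (y n) (c {x, z})"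
  shows "fan F c x (y(Suc n := z)) (Suc n)"
proof -
  have "inj_on (y(Suc n := z)) (insert (Suc n) {0..n})"
    using fan z(2) unfolding fan_def by (auto simp: inj_on_def)
  moreover have "insert (Suc n) {0..n} = {0..Suc n}" by auto
  ultimately show ?thesis
    using fan z(1,3) unfolding fan_def by (auto simp: le_Suc_eq)
qed

lemma exists_maximal_fan:
  assumes "finite F" "\<forall>f\<in>F. card f = 2"
  obtains y n where "fan F c x y n" "y 0 = y0"
    "\<And>z. {x, z} \<in> F \<Longrightarrow> missing F c (y n) (c {x, z}) \<Longrightarrow> z \<in> y ` {0..n}"
proof -
  define P where "P n \<longleftrightarrow> (\<exists>y. fan F c x y n \<and> y 0 = y0)" for n
  have "P 0" unfolding P_def fan_def by (rule exI[of _ "\<lambda>_. y0"]) auto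
  moreover have "n \<le> card (\<Union>F)" if "P n" for n
  proof -
    from that obtain y where y: "fan F c x y n" unfolding P_def by blast
    have "inj_on y {1..n}" using y unfolding fan_def by (auto intro: inj_on_subset)
    moreover have "y ` {1..n} \<subseteq> \<Union>F" using y unfolding fan_def by blast
    moreover have "finite (\<Union>F)"
      using assms by (metis card.infinite finite_Union zero_neq_numeral)
    ultimately show ?thesis using card_inj_on_le by fastforce
  qed
  ultimately obtain n where "P n" and greatest: "\<And>m. P m \<Longrightarrow> m \<le> n"
    using Nat.ex_has_greatest_nat[of P 0 "card (\<Union>F)"] by blast
  then obtain y where y: "fan F c x y n" "y 0 = y0" unfolding P_def by blast
  have "z \<in> y ` {0..n}" if "{x, z} \<in> F" "missing F c (y n) (c {x, z})" for z
  proof (rule ccontr)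
    assume "z \<notin> y ` {0..n}"
    then have "P (Suc n)"
      using fan_snoc[OF y(1) that(1) _ that(2)] y(2) unfolding P_def by fastforce
    then show False using greatest by fastforce
  qed
  with that y show ?thesis by blast
qed

text \<open>Swapping the \<open>\<alpha>\<beta>\<close>-chain keeps the fan condition for every fan edge except the
  \<open>\<beta>\<close>-coloured one, since the other fan edges are coloured neither \<open>\<alpha>\<close> (missing at \<open>x\<close>)
  nor \<open>\<beta>\<close>.\<close>
lemma (in kempe_chain) fan_swapped:
  assumes fan: "fan F c x y n" and j: "j \<in> {1..n}" "c {x, y j} = \<beta>"
    and i: "i \<le> n" "j \<le> i \<Longrightarrow> missing F swapped (y (j - 1)) (swapped {x, y j})"
  shows "fan F swapped x y i"
proof -
  have xj: "{x, y j} \<in> F" using fan j(1) unfolding fan_def by auto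
  have keep: "missing F swapped (y (l - 1)) (swapped {x, y l})"
    if l: "l \<in> {1..n}" "l \<noteq> j" for l
  proof -
    have xl: "{x, y l} \<in> F" "missing F c (y (l - 1)) (c {x, y l})"
      using fan l(1) unfolding fan_def by auto
    have "y l \<noteq> y j" using fan l j(1) unfolding fan_def inj_on_def by auto
    moreover have "y j \<noteq> x" using two_elements[OF xj] by (cases "y j = x") auto
    ultimately have "{x, y l} \<noteq> {x, y j}" by (auto simp: doubleton_eq_iff)
    then have "c {x, y l} \<noteq> \<beta>"
      using proper_edge_coloringD[OF proper xl(1) xj, of x] j(2) by auto
    moreover have "c {x, y l} \<noteq> \<alpha>" using missing_start xl(1) unfolding missing_def by auto
    ultimately show ?thesis
      using chain_subset missing_swapped_other_color xl(2) unfolding swapped_def by auto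
  qed
  show ?thesis
    unfolding fan_def
  proof (intro conjI ballI)
    show "inj_on y {0..i}" using fan_prefix[OF fan i(1)] unfolding fan_def by simp
  next
    fix l assume "l \<in> {1..i}"
    then show "{x, y l} \<in> F" using fan i(1) unfolding fan_def by auto
  next
    fix l assume "l \<in> {1..i}"
    then show "missing F swapped (y (l - 1)) (swapped {x, y l})"
      using keep[of l] i by (cases "l = j") auto
  qed
qed

text \<open>The Kempe step of Vizing's argument: \<open>\<beta>\<close> is missing at the end of the fan but used at
  \<open>x\<close> on the fan edge \<open>{x, y j}\<close>.  After swapping the \<open>\<alpha>\<beta>\<close>-chain from \<open>x\<close>, \<open>\<beta>\<close> is missing
  at \<open>x\<close>, and the chain ends at most at one of \<open>y (j - 1)\<close> and \<open>y n\<close>: if not at \<open>y (j - 1)\<close>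
  the fan up to \<open>j - 1\<close> can be rotated, otherwise the whole fan.\<close>
lemma extend_by_kempe_swap:
  fixes c :: "'a set \<Rightarrow> nat"
  assumes two: "\<forall>f\<in>insert {x, y 0} F. card f = 2"
    and proper: "proper_edge_coloring F c" and bounded: "\<forall>f\<in>F. c f < k"
    and fan: "fan F c x y n"
    and \<alpha>: "missing F c x \<alpha>" "\<alpha> < k" and \<beta>: "missing F c (y n) \<beta>" "\<beta> < k"
    and j: "j \<in> {1..n}" "c {x, y j} = \<beta>"
  shows "\<exists>c'. proper_edge_coloring (insert {x, y 0} F) c' \<and> (\<forall>f\<in>insert {x, y 0} F. c' f < k)"
proof -
  have xj: "{x, y j} \<in> F" and prev: "missing F c (y (j - 1)) \<beta>"
    using fan j unfolding fan_def by auto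
  have "\<alpha> \<noteq> \<beta>" using \<alpha>(1) xj j(2) unfolding missing_def by auto
  then interpret K: kempe_chain F c \<alpha> \<beta> x
    using two proper \<alpha>(1) by unfold_locales auto
  let ?c' = K.swapped
  have proper': "proper_edge_coloring F ?c'" by (rule K.proper_swapped)
  have bounded': "\<forall>f\<in>F. ?c' f < k"
    using bounded \<alpha>(2) \<beta>(2) unfolding K.swapped_def by auto
  have x_\<beta>: "missing F ?c' x \<beta>"
    using K.missing_swapped_on_walk[OF K.reaches_0, of \<alpha> \<beta>] \<alpha>(1) by simp
  have y_ne_x: "y l \<noteq> x" if "l \<le> n" for l
    using fan_vertex_ne[OF two fan that] .
  note fan' = K.fan_swapped[OF fan j]
  show ?thesis
  proof (cases "y (j - 1) \<in> \<Union>K.chain")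
    case False
    have "fan F ?c' x y (j - 1)" using j(1) by (intro fan') auto
    moreover have "missing F ?c' (y (j - 1)) \<beta>"
      using K.missing_swapped_off_chain[OF False] prev by simp
    ultimately show ?thesis using rotate_fan[where y = y, OF two proper' bounded'] x_\<beta> \<beta>(2) by blast
  next
    case True
    then obtain a where a: "K.reaches a" "y (j - 1) = K.walk a"
      using K.vertex_of_chain by blast
    have "y (j - 1) \<noteq> x" using j(1) by (intro y_ne_x) auto
    then have "0 < a" using a by (cases a) auto
    have "y n \<notin> \<Union>K.chain"
    proof
      assume "y n \<in> \<Union>K.chain"
      then obtain b where b: "K.reaches b" "y n = K.walk b"
        using K.vertex_of_chain by blast
      have "0 < b" using b y_ne_x[of n] by (cases b) auto
      then have "y (j - 1) = y n"
        using K.walk_missing_unique[OF a(1) b(1) \<open>0 < a\<close>] a(2) b(2) prev \<beta>(1) by simp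
      moreover have "j - 1 \<in> {0..n}" "j - 1 \<noteq> n" using j(1) by auto
      ultimately show False
        using inj_onD[of y "{0..n}" "j - 1" n] fan unfolding fan_def by auto
    qed
    then have end_\<beta>: "missing F ?c' (y n) \<beta>"
      using K.missing_swapped_off_chain \<beta>(1) by simp
    have "?c' {x, y j} = \<alpha>"
      using K.chain_closed[OF K.reaches_0 xj] j(2) \<open>\<alpha> \<noteq> \<beta>\<close> unfolding K.swapped_def by auto
    moreover have "missing F ?c' (y (j - 1)) \<alpha>"
      using K.missing_swapped_on_walk[OF a(1), of \<beta> \<alpha>] a(2) prev by (simp add: insert_commute)
    ultimately have "fan F ?c' x y n" by (intro fan') auto
    then show ?thesis using rotate_fan[where y = y, OF two proper' bounded'] x_\<beta> end_\<beta> \<beta>(2) by blast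
  qed
qed

lemma extend_proper_edge_coloring:
  fixes c :: "'a set \<Rightarrow> nat"
  assumes fin: "finite F" and two: "\<forall>f\<in>insert e F. card f = 2" and new: "e \<notin> F"
    and proper: "proper_edge_coloring F c" and bounded: "\<forall>f\<in>F. c f < k"
    and deg: "\<And>z. degree F z < k"
  shows "\<exists>c'. proper_edge_coloring (insert e F) c' \<and> (\<forall>f\<in>insert e F. c' f < k)"
proof -
  obtain x y0 where e: "e = {x, y0}" using two by (meson card_2_iff insertI1)
  obtain \<alpha> where \<alpha>: "missing F c x \<alpha>" "\<alpha> < k"
    using ex_missing_color[OF fin deg] by blast
  have twoF: "\<forall>f\<in>F. card f = 2" using two by simp
  obtain y n where fan: "fan F c x y n" and y0: "y 0 = y0"
    and maximal: "\<And>z. {x, z} \<in> F \<Longrightarrow> missing F c (y n) (c {x, z}) \<Longrightarrow> z \<in> y ` {0..n}"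
    by (rule exists_maximal_fan[OF fin twoF, of c x y0]) blast
  obtain \<beta> where \<beta>: "missing F c (y n) \<beta>" "\<beta> < k"
    using ex_missing_color[OF fin deg] by blast
  have e': "e = {x, y 0}" using e y0 by simp
  note two' = two[unfolded e']
  show ?thesis
  proof (cases "missing F c x \<beta>")
    case True
    have "\<exists>c'. proper_edge_coloring (insert {x, y 0} F) c' \<and> (\<forall>f\<in>insert {x, y 0} F. c' f < k)"
      by (rule rotate_fan[where y = y, OF two' proper bounded fan True \<beta>])
    then show ?thesis unfolding e' .
  next
    case False
    then obtain g where g: "g \<in> F" "x \<in> g" "c g = \<beta>" unfolding missing_def by blast
    have "card g = 2" using twoF g(1) by simp
    then obtain z where z: "g = {x, z}" using card_2_obtain g(2) by metis
    then have "z \<in> y ` {0..n}" using maximal[of z] g \<beta>(1) by simp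
    then obtain j where j: "j \<le> n" "z = y j" by auto
    have "j \<noteq> 0"
    proof
      assume "j = 0"
      with j z g(1) new e' show False by simp
    qed
    then have "j \<in> {1..n}" "c {x, y j} = \<beta>" using j z g by auto
    then have "\<exists>c'. proper_edge_coloring (insert {x, y 0} F) c' \<and> (\<forall>f\<in>insert {x, y 0} F. c' f < k)"
      by (rule extend_by_kempe_swap[where y = y, OF two' proper bounded fan \<alpha> \<beta>])
    then show ?thesis unfolding e' .
  qed
qed

theorem vizing:
  fixes E :: "'a set set"
  assumes "finite E" "\<forall>f\<in>E. card f = 2" "\<And>z. degree E z < k"
  shows "\<exists>c :: 'a set \<Rightarrow> nat. proper_edge_coloring E c \<and> (\<forall>f\<in>E. c f < k)"
  using assms
proof (induction E rule: finite_induct)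
  case empty
  then show ?case unfolding proper_edge_coloring_def by simp
next
  case (insert e F)
  have "degree F z < k" for z
  proof -
    have "degree F z \<le> degree (insert e F) z"
      using insert.hyps(1) by (intro degree_mono) auto
    then show ?thesis using insert.prems(2)[of z] by simp
  qed
  moreover have "\<forall>f\<in>F. card f = 2" using insert.prems(1) by simp
  ultimately obtain c :: "'a set \<Rightarrow> nat" where "proper_edge_coloring F c" "\<forall>f\<in>F. c f < k"
    using insert.IH by blast
  then show ?case
    using extend_proper_edge_coloring[OF insert.hyps(1) insert.prems(1) insert.hyps(2)]
      \<open>\<And>z. degree F z < k\<close> by blast
qed

section \<open>Localized colourings\<close>

lemma greedy_coloring:
  fixes R :: "'b \<Rightarrow> 'b \<Rightarrow> bool"
  assumes "finite E" "symp_on E R" "irreflp_on E R" "\<forall>e\<in>E. card {f\<in>E. R e f} \<le> K"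
  shows "\<exists>c :: 'b \<Rightarrow> nat. (\<forall>e\<in>E. \<forall>f\<in>E. R e f \<longrightarrow> c e \<noteq> c f) \<and> (\<forall>e\<in>E. c e < Suc K)"
  using assms
proof (induction E rule: finite_induct)
  case empty
  then show ?case by simp
next
  case (insert e F)
  have "symp_on F R" "irreflp_on F R"
    using insert.prems(1,2) unfolding symp_on_def irreflp_on_def by auto
  moreover have "card {f\<in>F. R e' f} \<le> K" if "e' \<in> F" for e'
  proof -
    have "card {f\<in>F. R e' f} \<le> card {f\<in>insert e F. R e' f}"
      using insert.hyps(1) by (intro card_mono) auto
    then show ?thesis using insert.prems(3) that by fastforce
  qed
  ultimately obtain c :: "'b \<Rightarrow> nat" where
    c: "\<forall>e\<in>F. \<forall>f\<in>F. R e f \<longrightarrow> c e \<noteq> c f" "\<forall>e\<in>F. c e < Suc K"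
    using insert.IH by blast
  have fin: "finite {f\<in>F. R e f}" using insert.hyps(1) by simp
  have "card (c ` {f\<in>F. R e f}) \<le> card {f\<in>insert e F. R e f}"
    using card_image_le[OF fin, of c] card_mono[of "{f\<in>insert e F. R e f}" "{f\<in>F. R e f}"]
      insert.hyps(1) by fastforce
  also have "\<dots> \<le> K" using insert.prems(3) by simp
  finally obtain \<gamma> where \<gamma>: "\<gamma> < Suc K" "\<gamma> \<notin> c ` {f\<in>F. R e f}"
    using ex_less_notin[of "c ` {f\<in>F. R e f}" "Suc K"] fin by auto
  have new_vs_old: "\<gamma> \<noteq> c f" if "f \<in> F" "R e f \<or> R f e" for f
    using insert.prems(1) that \<gamma>(2) unfolding symp_on_def by blast
  have "\<not> R e e" using insert.prems(2) unfolding irreflp_on_def by simp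
  then have "\<forall>e1\<in>insert e F. \<forall>e2\<in>insert e F. R e1 e2 \<longrightarrow> (c(e := \<gamma>)) e1 \<noteq> (c(e := \<gamma>)) e2"
    using c(1) new_vs_old insert.hyps(2) by (auto simp: eq_commute[of \<gamma>])
  moreover have "\<forall>e1\<in>insert e F. (c(e := \<gamma>)) e1 < Suc K" using c(2) \<gamma>(1) by simp
  ultimately show ?case by blast
qed

lemma nat_mod_less: "0 < n \<Longrightarrow> nat (a mod int n) < n"
  by (simp add: nat_less_iff)

lemma L_neighborhood_subset: "L_neighborhood rot L u e \<subseteq> set (rot u) - {e}"
proof
  fix f assume "f \<in> L_neighborhood rot L u e"
  then obtain i j where ij: "f = rot u ! nat ((int i + j) mod int (length (rot u)))"
    "i < length (rot u)" "f \<noteq> e"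
    unfolding L_neighborhood_def by blast
  have "nat ((int i + j) mod int (length (rot u))) < length (rot u)"
    using ij(2) by (intro nat_mod_less) linarith
  then show "f \<in> set (rot u) - {e}" using ij(1,3) by simp
qed

lemma finite_L_neighborhood: "finite (L_neighborhood rot L u e)"
  using L_neighborhood_subset by (rule finite_subset) simp

lemma L_neighborhood_sym:
  assumes "f \<in> L_neighborhood rot L u e"
  shows "e \<in> L_neighborhood rot L u f"
proof -
  let ?n = "length (rot u)"
  obtain i j where ij: "f = rot u ! nat ((int i + j) mod int ?n)" "i < ?n" "rot u ! i = e"
    "j \<in> {- int (L div 2) .. int (L div 2)}" "j \<noteq> 0" "f \<noteq> e"
    using assms unfolding L_neighborhood_def by blast
  define i' where "i' = nat ((int i + j) mod int ?n)"
  have "0 < int ?n" using ij(2) by linarith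
  then have i': "int i' = (int i + j) mod int ?n" unfolding i'_def by simp
  have "(int i' + - j) mod int ?n = (int i + j - j) mod int ?n"
    unfolding i' by (simp add: mod_diff_left_eq)
  also have "\<dots> = int i" using ij(2) by simp
  finally have "e = rot u ! nat ((int i' + - j) mod int ?n)" using ij(3) by simp
  moreover have "i' < ?n" unfolding i'_def using ij(2) by (intro nat_mod_less) linarith
  moreover have "rot u ! i' = f" using ij(1) unfolding i'_def by simp
  moreover have "- j \<in> {- int (L div 2) .. int (L div 2)}" "- j \<noteq> 0" using ij(4,5) by auto
  ultimately show ?thesis using ij(6) unfolding L_neighborhood_def by blast
qed

lemma card_L_neighborhood_le:
  assumes "distinct (rot u)"
  shows "card (L_neighborhood rot L u e) \<le> L"
proof (cases "L_neighborhood rot L u e = {}")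
  case False
  let ?n = "length (rot u)"
  let ?J = "{- int (L div 2) .. int (L div 2)} - {0}"
  from False obtain i0 where i0: "i0 < ?n" "rot u ! i0 = e"
    unfolding L_neighborhood_def by blast
  have "L_neighborhood rot L u e \<subseteq> (\<lambda>j. rot u ! nat ((int i0 + j) mod int ?n)) ` ?J"
  proof
    fix f assume "f \<in> L_neighborhood rot L u e"
    then obtain i j where ij: "f = rot u ! nat ((int i + j) mod int ?n)" "i < ?n"
      "rot u ! i = e" "j \<in> ?J"
      unfolding L_neighborhood_def by blast
    have "i = i0" using nth_eq_iff_index_eq[OF assms ij(2) i0(1)] ij(3) i0(2) by simp
    then show "f \<in> (\<lambda>j. rot u ! nat ((int i0 + j) mod int ?n)) ` ?J" using ij by blast
  qed
  then have "card (L_neighborhood rot L u e)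
      \<le> card ((\<lambda>j. rot u ! nat ((int i0 + j) mod int ?n)) ` ?J)"
    by (intro card_mono) simp_all
  also have "\<dots> \<le> card ?J" by (intro card_image_le) simp
  also have "\<dots> = 2 * (L div 2)" by simp
  finally show ?thesis by simp
qed simp

lemma L_neighborhood_incident:
  assumes "rotation_system V E rot" "u \<in> V" "f \<in> L_neighborhood rot L u e"
  shows "f \<in> E \<and> u \<in> f \<and> f \<noteq> e"
  using subsetD[OF L_neighborhood_subset assms(3)] assms(1,2)
  unfolding rotation_system_def incident_edges_def by auto

lemma L_localized_coloring_if_proper:
  assumes "rotation_system V E rot" "\<forall>e\<in>E. e \<subseteq> V" "proper_edge_coloring E c"
  shows "L_localized_coloring E rot L c"
  unfolding L_localized_coloring_def
proof (intro ballI)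
  fix e u f assume e: "e \<in> E" and u: "u \<in> e" and f: "f \<in> L_neighborhood rot L u e"
  then have "f \<in> E" "u \<in> f" "f \<noteq> e"
    using L_neighborhood_incident[OF assms(1) _ f] assms(2) by auto
  then show "c f \<noteq> c e" using proper_edge_coloringD[OF assms(3) _ e _ u] by blast
qed

lemma card_L_conflicts_le:
  assumes "rotation_system V E rot" "e \<subseteq> V" "card e = 2"
  shows "card (\<Union>u\<in>e. L_neighborhood rot L u e) \<le> 2 * L"
proof -
  obtain a b where ab: "e = {a, b}" "a \<in> V" "b \<in> V"
    using assms(2,3) unfolding card_2_iff by blast
  then have "distinct (rot a)" "distinct (rot b)"
    using assms(1) unfolding rotation_system_def by blast+
  then have "card (L_neighborhood rot L a e) \<le> L" "card (L_neighborhood rot L b e) \<le> L"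
    using card_L_neighborhood_le[of rot a L e] card_L_neighborhood_le[of rot b L e] by simp_all
  moreover have "card (\<Union>u\<in>e. L_neighborhood rot L u e)
      \<le> card (L_neighborhood rot L a e) + card (L_neighborhood rot L b e)"
    unfolding ab(1) by (simp add: card_Un_le)
  ultimately show ?thesis by simp
qed

lemma ex_L_localized_coloring:
  assumes "finite E" "rotation_system V E rot" "\<forall>e\<in>E. e \<subseteq> V \<and> card e = 2"
  shows "\<exists>c :: 'a set \<Rightarrow> nat. L_localized_coloring E rot L c \<and> (\<forall>e\<in>E. c e < Suc (2 * L))"
proof -
  define R where "R e f \<longleftrightarrow> f \<in> (\<Union>u\<in>e. L_neighborhood rot L u e)" for e f
  have incident: "f \<in> E \<and> u \<in> f \<and> f \<noteq> e"
    if "e \<in> E" "u \<in> e" "f \<in> L_neighborhood rot L u e" for e u f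
  proof -
    have "u \<in> V" using assms(3) that(1,2) by blast
    then show ?thesis using L_neighborhood_incident[OF assms(2) _ that(3)] by blast
  qed
  have sym: "symp_on E R"
    unfolding symp_on_def
  proof (intro ballI impI)
    fix e f assume "e \<in> E" "R e f"
    then obtain u where u: "u \<in> e" "f \<in> L_neighborhood rot L u e" unfolding R_def by blast
    then have "u \<in> f" using incident[OF \<open>e \<in> E\<close>] by blast
    with L_neighborhood_sym[OF u(2)] show "R f e" unfolding R_def by blast
  qed
  have irrefl: "irreflp_on E R"
    unfolding irreflp_on_def R_def using incident by blast
  have bound: "\<forall>e\<in>E. card {f\<in>E. R e f} \<le> 2 * L"
  proof
    fix e assume "e \<in> E"
    then have "finite e" using assms(3) card.infinite by fastforce
    then have "finite (\<Union>u\<in>e. L_neighborhood rot L u e)" by (simp add: finite_L_neighborhood)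
    then have "card {f\<in>E. R e f} \<le> card (\<Union>u\<in>e. L_neighborhood rot L u e)"
      unfolding R_def by (rule card_mono) auto
    also have "\<dots> \<le> 2 * L"
      using card_L_conflicts_le[OF assms(2)] assms(3) \<open>e \<in> E\<close> by blast
    finally show "card {f\<in>E. R e f} \<le> 2 * L" .
  qed
  obtain c :: "'a set \<Rightarrow> nat"
    where c: "\<forall>e\<in>E. \<forall>f\<in>E. R e f \<longrightarrow> c e \<noteq> c f" "\<forall>e\<in>E. c e < Suc (2 * L)"
    using greedy_coloring[OF assms(1) sym irrefl bound] by blast
  have "L_localized_coloring E rot L c"
    unfolding L_localized_coloring_def
  proof (intro ballI)
    fix e u f assume "e \<in> E" "u \<in> e" "f \<in> L_neighborhood rot L u e"
    moreover from this have "R e f" unfolding R_def by blast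
    ultimately show "c f \<noteq> c e" using c(1) incident by metis
  qed
  with c(2) show ?thesis by blast
qed

lemma degree_le_max_degree:
  assumes "finite V" "\<forall>e\<in>E. e \<subseteq> V"
  shows "degree E z \<le> max_degree V E"
proof (cases "z \<in> V")
  case True
  then show ?thesis unfolding max_degree_def using assms(1) by simp
next
  case False
  then have "incident_edges E z = {}" using assms(2) unfolding incident_edges_def by auto
  then show ?thesis unfolding degree_def by simp
qed

theorem mainTheorem3:
  fixes V :: "'a set" and E :: "'a set set" and rot :: "'a \<Rightarrow> 'a set list"
    and d L :: nat
  assumes "finite_simple_graph V E"
    and "d = max_degree V E"
    and "rotation_system V E rot"
    and "L \<ge> 2" and "even L"
  shows "\<exists>col :: 'a set \<Rightarrow> nat.
           L_localized_coloring E rot L col \<and>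
           card (col ` E) \<le> min d (2 * L) + 1"
proof -
  have finV: "finite V" and edges: "\<forall>e\<in>E. e \<subseteq> V \<and> card e = 2"
    using assms(1) unfolding finite_simple_graph_def by auto
  have "E \<subseteq> Pow V" using edges by auto
  then have finE: "finite E" using finV by (simp add: finite_subset)
  show ?thesis
  proof (cases "d \<le> 2 * L")
    case True
    have "degree E z < Suc d" for z
      using degree_le_max_degree[OF finV] edges assms(2) by (simp add: le_imp_less_Suc)
    then obtain c :: "'a set \<Rightarrow> nat" where c: "proper_edge_coloring E c" "\<forall>e\<in>E. c e < Suc d"
      using vizing[OF finE] edges by blast
    have "L_localized_coloring E rot L c"
      using L_localized_coloring_if_proper[OF assms(3) _ c(1)] edges by blast
    moreover have "card (c ` E) \<le> min d (2 * L) + 1"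
      using card_image_le_bound[OF c(2)] True by simp
    ultimately show ?thesis by blast
  next
    case False
    obtain c :: "'a set \<Rightarrow> nat" where c: "L_localized_coloring E rot L c" "\<forall>e\<in>E. c e < Suc (2 * L)"
      using ex_L_localized_coloring[OF finE assms(3) edges] by blast
    moreover have "card (c ` E) \<le> min d (2 * L) + 1"
      using card_image_le_bound[OF c(2)] False by simp
    ultimately show ?thesis by blast
  qed
qed

end
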